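(* Let $\Gamma_1,\Gamma_2$ be propositional theories over a signature $\mathcal L$ (possibly infinite). Then $\Gamma_1$ and $\Gamma_2$ are uniformly equivalent if and only if $C_u(\Gamma_1)=C_u(\Gamma_2)$.
   Context: A propositional signature $\mathcal L$ is a set of atoms. Formulas are built from atoms and $\bot$ using $\wedge,\vee,\to$; $\neg\phi$ abbreviates $\phi\to\bot$ and $\top$ abbreviates $\bot\to\bot$. A theory is a set of formulas. An HT-interpretation over $\mathcal L$ is a pair $(X,Y)$ with $X\subseteq Y\subseteq\mathcal L$; it is total if $X=Y$. $Y\models\phi$ denotes classical satisfaction (atoms in $Y$ true, all others false). HT-satisfaction is defined recursively: $(X,Y)\models a$ iff $a\in X$ for an atom $a$; $(X,Y)\not\models\bot$; $(X,Y)\models\phi\wedge\psi$ iff both conjuncts are satisfied; $(X,Y)\models\phi\vee\psi$ iff one disjunct is satisfied; $(X,Y)\models\phi\to\psi$ iff (i) $(X,Y)\not\models\phi$ or $(X,Y)\models\psi$, and (ii) $Y\models\phi\to\psi$. $(X,Y)\models\Gamma$ iff $(X,Y)$ satisfies every formula of $\Gamma$. An HT-countermodel of $\Gamma$ is an HT-interpretation $(X,Y)$ with $(X,Y)\not\models\Gamma$; $C_s(\Gamma)$ is the set of HT-countermodels of $\Gamma$ (over $\mathcal L$). A total $(Y,Y)$ is an equilibrium model of $\Gamma$ iff $(Y,Y)\models\Gamma$ and $(X,Y)\not\models\Gamma$ for every $X\subsetneq Y$; then $Y$ is an answer set of $\Gamma$. A formula is factual if it is built from atoms and $\bot$ using only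 $\wedge$, $\vee$ and implications of the form $\phi\to\bot$. Theories $\Gamma_1,\Gamma_2$ over $\mathcal L$ are uniformly equivalent iff for every signature $\mathcal L'\supseteq\mathcal L$ and every factual theory $\Gamma$ over $\mathcal L'$, the theories $\Gamma_1\cup\Gamma$ and $\Gamma_2\cup\Gamma$ have the same answer sets. An HT-interpretation $(X,Y)$ is there-closed in a set $S$ of HT-interpretations if $(Y,Y)\notin S$ and $(X',Y)\in S$ for every $X'$ with $X\subseteq X'\subsetneq Y$. $C_u(\Gamma)$ denotes the set of all HT-interpretations over $\mathcal L$ that are there-closed in $C_s(\Gamma)$. *)

theory Defs
  imports Main
begin

datatype 'a form =
    Atom 'a
  | Bot
  | And "'a form" "'a form"
  | Or "'a form" "'a form"
  | Imp "'a form" "'a form"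

definition Neg :: "'a form \<Rightarrow> 'a form" where
  "Neg \<phi> = Imp \<phi> Bot"

definition Top :: "'a form" where
  "Top = Imp Bot Bot"

fun atoms :: "'a form \<Rightarrow> 'a set" where
  "atoms (Atom a) = {a}"
| "atoms Bot = {}"
| "atoms (And \<phi> \<psi>) = atoms \<phi> \<union> atoms \<psi>"
| "atoms (Or \<phi> \<psi>) = atoms \<phi> \<union> atoms \<psi>"
| "atoms (Imp \<phi> \<psi>) = atoms \<phi> \<union> atoms \<psi>"

definition theory_over :: "'a set \<Rightarrow> 'a form set \<Rightarrow> bool" where
  "theory_over L \<Gamma> \<longleftrightarrow> (\<forall>\<phi>\<in>\<Gamma>. atoms \<phi> \<subseteq> L)"

fun csat :: "'a set \<Rightarrow> 'a form \<Rightarrow> bool" where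
  "csat Y (Atom a) = (a \<in> Y)"
| "csat Y Bot = False"
| "csat Y (And \<phi> \<psi>) = (csat Y \<phi> \<and> csat Y \<psi>)"
| "csat Y (Or \<phi> \<psi>) = (csat Y \<phi> \<or> csat Y \<psi>)"
| "csat Y (Imp \<phi> \<psi>) = (csat Y \<phi> \<longrightarrow> csat Y \<psi>)"

fun htsat :: "'a set \<Rightarrow> 'a set \<Rightarrow> 'a form \<Rightarrow> bool" where
  "htsat X Y (Atom a) = (a \<in> X)"
| "htsat X Y Bot = False"
| "htsat X Y (And \<phi> \<psi>) = (htsat X Y \<phi> \<and> htsat X Y \<psi>)"
| "htsat X Y (Or \<phi> \<psi>) = (htsat X Y \<phi> \<or> htsat X Y \<psi>)"
| "htsat X Y (Imp \<phi> \<psi>) =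
     ((\<not> htsat X Y \<phi> \<or> htsat X Y \<psi>) \<and> csat Y (Imp \<phi> \<psi>))"

definition htsat_th :: "'a set \<Rightarrow> 'a set \<Rightarrow> 'a form set \<Rightarrow> bool" where
  "htsat_th X Y \<Gamma> \<longleftrightarrow> (\<forall>\<phi>\<in>\<Gamma>. htsat X Y \<phi>)"

definition ht_interp :: "'a set \<Rightarrow> ('a set \<times> 'a set) set" where
  "ht_interp L = {(X, Y). X \<subseteq> Y \<and> Y \<subseteq> L}"

definition answer_sets :: "'a set \<Rightarrow> 'a form set \<Rightarrow> 'a set set" where
  "answer_sets L \<Gamma> =
     {Y. Y \<subseteq> L \<and> htsat_th Y Y \<Gamma> \<and> (\<forall>X. X \<subset> Y \<longrightarrow> \<not> htsat_th X Y \<Gamma>)}"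

fun factual :: "'a form \<Rightarrow> bool" where
  "factual (Atom a) = True"
| "factual Bot = True"
| "factual (And \<phi> \<psi>) = (factual \<phi> \<and> factual \<psi>)"
| "factual (Or \<phi> \<psi>) = (factual \<phi> \<and> factual \<psi>)"
| "factual (Imp \<phi> Bot) = factual \<phi>"
| "factual (Imp \<phi> \<psi>) = False"

definition uniformly_equivalent :: "'a set \<Rightarrow> 'a form set \<Rightarrow> 'a form set \<Rightarrow> bool" where
  "uniformly_equivalent L \<Gamma>1 \<Gamma>2 \<longleftrightarrow>
     (\<forall>L' \<Gamma>. L \<subseteq> L' \<longrightarrow> theory_over L' \<Gamma> \<longrightarrow> (\<forall>\<phi>\<in>\<Gamma>. factual \<phi>) \<longrightarrow>
        answer_sets L' (\<Gamma>1 \<union> \<Gamma>) = answer_sets L' (\<Gamma>2 \<union> \<Gamma>))"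

definition Cs :: "'a set \<Rightarrow> 'a form set \<Rightarrow> ('a set \<times> 'a set) set" where
  "Cs L \<Gamma> = {(X, Y). (X, Y) \<in> ht_interp L \<and> \<not> htsat_th X Y \<Gamma>}"

definition there_closed :: "('a set \<times> 'a set) set \<Rightarrow> 'a set \<Rightarrow> 'a set \<Rightarrow> bool" where
  "there_closed S X Y \<longleftrightarrow>
     (Y, Y) \<notin> S \<and> (\<forall>X'. X \<subseteq> X' \<and> X' \<subset> Y \<longrightarrow> (X', Y) \<in> S)"

definition Cu :: "'a set \<Rightarrow> 'a form set \<Rightarrow> ('a set \<times> 'a set) set" where
  "Cu L \<Gamma> = {(X, Y). (X, Y) \<in> ht_interp L \<and> there_closed (Cs L \<Gamma>) X Y}"

end

theory Submission
  imports Defs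
begin

(* Only-if: the factual extensions by sets of atoms already suffice.  For
   X \<subseteq> Y \<subseteq> L, the pair (X, Y) lies in Cu L \<Gamma> exactly when Y is an answer set
   of \<Gamma> extended by the facts X (Cu_iff_answer_set), so equal answer sets under
   all such extensions force Cu L \<Gamma>1 = Cu L \<Gamma>2.

   If: let Y be an answer set of \<Gamma>1 \<union> \<Gamma> over L' \<supseteq> L with \<Gamma> factual.  Since
   satisfaction of a theory over L only depends on the atoms in L, the
   projection (Y \<inter> L, Y \<inter> L) is a total model in Cu L \<Gamma>1, hence of \<Gamma>2.  If some
   X \<subset> Y satisfied \<Gamma>2 \<union> \<Gamma> at Y, then (X \<inter> L, Y \<inter> L) would be there-closed in
   the countermodels of \<Gamma>1 (projection_in_Cu, which uses minimality of Y and
   the monotonicity of factual formulas in the here-world), so it would lie in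
   Cu L \<Gamma>2 and thus refute \<Gamma>2, a contradiction (answer_set_transfer).  By
   symmetry the answer sets coincide. *)

lemma csat_restrict: "atoms \<phi> \<subseteq> L \<Longrightarrow> csat Y \<phi> = csat (Y \<inter> L) \<phi>"
  by (induction \<phi>) auto

lemma htsat_restrict: "atoms \<phi> \<subseteq> L \<Longrightarrow> htsat X Y \<phi> = htsat (X \<inter> L) (Y \<inter> L) \<phi>"
  by (induction \<phi>) (auto simp: csat_restrict[of _ L Y])

lemma htsat_th_restrict:
  assumes "theory_over L \<Gamma>"
  shows "htsat_th X Y \<Gamma> = htsat_th (X \<inter> L) (Y \<inter> L) \<Gamma>"
  using assms htsat_restrict unfolding theory_over_def htsat_th_def by metis

lemma htsat_imp_csat: "X \<subseteq> Y \<Longrightarrow> htsat X Y \<phi> \<Longrightarrow> csat Y \<phi>"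
  by (induction \<phi>) auto

text \<open>Factual formulas stay true when the here-world grows (below the there-world);
  this is why factual extensions cannot distinguish more than Cu does.\<close>

lemma factual_htsat_mono:
  "factual \<phi> \<Longrightarrow> X \<subseteq> X' \<Longrightarrow> X' \<subseteq> Y \<Longrightarrow> htsat X Y \<phi> \<Longrightarrow> htsat X' Y \<phi>"
proof (induction \<phi> rule: factual.induct)
  case (5 \<phi>)
  then show ?case using htsat_imp_csat[of X' Y \<phi>] by auto
qed auto

lemma total_in_Cu_iff: "(Y, Y) \<in> Cu L \<Gamma> \<longleftrightarrow> Y \<subseteq> L \<and> htsat_th Y Y \<Gamma>"
  unfolding Cu_def Cs_def ht_interp_def there_closed_def by auto

lemma nontotal_Cu_countermodel:
  "(X, Y) \<in> Cu L \<Gamma> \<Longrightarrow> X \<noteq> Y \<Longrightarrow> \<not> htsat_th X Y \<Gamma>"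
  unfolding Cu_def there_closed_def Cs_def ht_interp_def by auto

lemma Cu_iff_answer_set:
  assumes "X \<subseteq> Y" "Y \<subseteq> L"
  shows "(X, Y) \<in> Cu L \<Gamma> \<longleftrightarrow> Y \<in> answer_sets L (\<Gamma> \<union> Atom ` X)"
proof -
  have facts: "htsat_th X' Y (\<Gamma> \<union> Atom ` X) \<longleftrightarrow> X \<subseteq> X' \<and> htsat_th X' Y \<Gamma>" for X'
    unfolding htsat_th_def by (auto simp: ball_Un subset_eq)
  have "(X, Y) \<in> Cu L \<Gamma> \<longleftrightarrow>
      htsat_th Y Y \<Gamma> \<and> (\<forall>X'. X \<subseteq> X' \<and> X' \<subset> Y \<longrightarrow> \<not> htsat_th X' Y \<Gamma>)"
    using assms unfolding Cu_def there_closed_def Cs_def ht_interp_def by auto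
  also have "\<dots> \<longleftrightarrow> Y \<in> answer_sets L (\<Gamma> \<union> Atom ` X)"
    using assms by (auto simp: answer_sets_def facts)
  finally show ?thesis .
qed

lemma projection_in_Cu:
  assumes over: "theory_over L \<Gamma>1"
    and fac: "\<forall>\<phi>\<in>\<Gamma>. factual \<phi>"
    and ans: "Y \<in> answer_sets L' (\<Gamma>1 \<union> \<Gamma>)"
    and XY: "X \<subseteq> Y" and sat: "htsat_th X Y \<Gamma>"
    and proper: "X \<inter> L \<subset> Y \<inter> L"
  shows "(X \<inter> L, Y \<inter> L) \<in> Cu L \<Gamma>1"
proof -
  have model: "htsat_th Y Y \<Gamma>1"
    and minimal: "\<And>Z. Z \<subset> Y \<Longrightarrow> \<not> htsat_th Z Y (\<Gamma>1 \<union> \<Gamma>)"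
    using ans unfolding answer_sets_def htsat_th_def by auto
  have refuted: "\<not> htsat_th X' (Y \<inter> L) \<Gamma>1" if X': "X \<inter> L \<subseteq> X'" "X' \<subset> Y \<inter> L" for X'
  proof -
    \<comment> \<open>Lift X' back to a here-world Z \<subset> Y that still satisfies the factual \<Gamma>.\<close>
    define Z where "Z = X' \<union> X"
    have "Z \<subset> Y" and Z_L: "Z \<inter> L = X'"
      using X' XY unfolding Z_def by auto
    moreover have "htsat_th Z Y \<Gamma>"
      using sat fac factual_htsat_mono[of _ X Z Y] \<open>Z \<subset> Y\<close>
      unfolding Z_def htsat_th_def by blast
    ultimately have "\<not> htsat_th Z Y \<Gamma>1"
      using minimal unfolding htsat_th_def by blast
    then show ?thesis using htsat_th_restrict[OF over, of Z Y] Z_L by simp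
  qed
  have total: "htsat_th (Y \<inter> L) (Y \<inter> L) \<Gamma>1"
    using model htsat_th_restrict[OF over] by metis
  have "there_closed (Cs L \<Gamma>1) (X \<inter> L) (Y \<inter> L)"
    unfolding there_closed_def Cs_def ht_interp_def using total refuted by blast
  then show ?thesis using proper unfolding Cu_def ht_interp_def by blast
qed

lemma answer_set_transfer:
  assumes over1: "theory_over L \<Gamma>1" and over2: "theory_over L \<Gamma>2"
    and eq: "Cu L \<Gamma>1 = Cu L \<Gamma>2"
    and fac: "\<forall>\<phi>\<in>\<Gamma>. factual \<phi>"
    and ans: "Y \<in> answer_sets L' (\<Gamma>1 \<union> \<Gamma>)"
  shows "Y \<in> answer_sets L' (\<Gamma>2 \<union> \<Gamma>)"
proof -
  have "Y \<subseteq> L'" and model1: "htsat_th Y Y \<Gamma>1" and modelG: "htsat_th Y Y \<Gamma>"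
    and minimal: "\<And>X. X \<subset> Y \<Longrightarrow> \<not> htsat_th X Y (\<Gamma>1 \<union> \<Gamma>)"
    using ans unfolding answer_sets_def htsat_th_def by auto
  have "(Y \<inter> L, Y \<inter> L) \<in> Cu L \<Gamma>1"
    using model1 htsat_th_restrict[OF over1] total_in_Cu_iff by (metis inf_le2)
  then have "htsat_th (Y \<inter> L) (Y \<inter> L) \<Gamma>2"
    using eq total_in_Cu_iff by metis
  then have model2: "htsat_th Y Y \<Gamma>2"
    using htsat_th_restrict[OF over2] by metis
  have "\<not> htsat_th X Y (\<Gamma>2 \<union> \<Gamma>)" if XY: "X \<subset> Y" for X
  proof
    assume "htsat_th X Y (\<Gamma>2 \<union> \<Gamma>)"
    then have sat2: "htsat_th X Y \<Gamma>2" and satG: "htsat_th X Y \<Gamma>"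
      unfolding htsat_th_def by auto
    show False
    proof (cases "X \<inter> L = Y \<inter> L")
      case True
      \<comment> \<open>X agrees with Y on L, so X inherits the model property of \<Gamma>1 from Y.\<close>
      then have "htsat_th X Y \<Gamma>1"
        using model1 htsat_th_restrict[OF over1, of X Y] htsat_th_restrict[OF over1, of Y Y]
        by simp
      then show False using minimal[OF XY] satG unfolding htsat_th_def by auto
    next
      case False
      then have "(X \<inter> L, Y \<inter> L) \<in> Cu L \<Gamma>2"
        using projection_in_Cu[OF over1 fac ans _ satG] XY eq by auto
      then have "\<not> htsat_th (X \<inter> L) (Y \<inter> L) \<Gamma>2"
        using nontotal_Cu_countermodel False by blast
      then show False using sat2 htsat_th_restrict[OF over2, of X Y] by simp
    qed
  qed
  then show ?thesis
    using \<open>Y \<subseteq> L'\<close> model2 modelG unfolding answer_sets_def htsat_th_def by auto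
qed

theorem mainTheorem1:
  fixes L :: "'a set" and \<Gamma>1 \<Gamma>2 :: "'a form set"
  assumes "theory_over L \<Gamma>1" and "theory_over L \<Gamma>2"
  shows "uniformly_equivalent L \<Gamma>1 \<Gamma>2 \<longleftrightarrow> Cu L \<Gamma>1 = Cu L \<Gamma>2"
proof
  assume unif: "uniformly_equivalent L \<Gamma>1 \<Gamma>2"
  have "(X, Y) \<in> Cu L \<Gamma>1 \<longleftrightarrow> (X, Y) \<in> Cu L \<Gamma>2" for X Y
  proof (cases "X \<subseteq> Y \<and> Y \<subseteq> L")
    case True
    then have "theory_over L (Atom ` X)" and "\<forall>\<phi>\<in>Atom ` X. factual \<phi>"
      unfolding theory_over_def by auto
    then have "answer_sets L (\<Gamma>1 \<union> Atom ` X) = answer_sets L (\<Gamma>2 \<union> Atom ` X)"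
      using unif unfolding uniformly_equivalent_def by blast
    then show ?thesis using Cu_iff_answer_set[of X Y L] True by simp
  next
    case False
    then show ?thesis unfolding Cu_def ht_interp_def by auto
  qed
  then show "Cu L \<Gamma>1 = Cu L \<Gamma>2" by auto
next
  assume eq: "Cu L \<Gamma>1 = Cu L \<Gamma>2"
  show "uniformly_equivalent L \<Gamma>1 \<Gamma>2"
    unfolding uniformly_equivalent_def
  proof (intro allI impI)
    fix L' :: "'a set" and \<Gamma> :: "'a form set"
    assume "\<forall>\<phi>\<in>\<Gamma>. factual \<phi>"
    then show "answer_sets L' (\<Gamma>1 \<union> \<Gamma>) = answer_sets L' (\<Gamma>2 \<union> \<Gamma>)"
      using answer_set_transfer[OF assms eq] answer_set_transfer[OF assms(2,1) eq[symmetric]]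
      by blast
  qed
qed

end
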